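(* Let $V\subseteq\mathcal{V}$ be a set of interpretations and consider $\sigma\in\{\mathrm{adm},\mathrm{com},\mathrm{mod}\}$. There is an ADF $D$ such that $\sigma(D)=V$ if and only if there is a $\sigma$-characterization for $V$.
   Context: Let $A$ be a fixed finite set of statements. An interpretation is a mapping $v:A\to\{\mathbf{t},\mathbf{f},\mathbf{u}\}$; $\mathcal{V}$ is the set of all interpretations and $\mathcal{V}_2$ the set of two-valued ones. The information ordering is $\mathbf{u}<_i\mathbf{t}$, $\mathbf{u}<_i\mathbf{f}$, extended pointwise. For $v\in\mathcal{V}$, $[v]_2$ is the set of two-valued interpretations $w$ with $v\leq_i w$. An ADF is $D=(A,L,C)$ where each statement $a$ has an acceptance formula $\varphi_a$ over its parents. The operator $\Gamma_D$ maps $v$ to the interpretation assigning to each $a$ the greatest lower bound w.r.t. $\leq_i$ (consensus: $\mathbf{t}$ if all are $\mathbf{t}$, $\mathbf{f}$ if all are $\mathbf{f}$, otherwise $\mathbf{u}$) of $\{w(\varphi_a)\mid w\in[v]_2\}$. $v$ is admissible iff $v\leq_i\Gamma_D(v)$, complete iff $\Gamma_D(v)=v$, a two-valued model iff it is two-valued and $\Gamma_D(v)=v$; these sets are $\mathrm{adm}(D),\mathrm{com}(D),\mathrm{mod}(D)$. For $f:\mathcal{V}_2\to\mathcal{V}_2$: - $f$ is an adm-characterization of $V$ iff for each $v\in\mathcal{V}$: $v\in V$ iff for every $a\in A$, $v(a)\neq\mathbf{u}$ implies $f(v_2)(a)=v(a)$ for all $v_2\in[v]_2$. - $f$ is a com-characterization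 of $V$ iff for each $v\in\mathcal{V}$: $v\in V$ iff for every $a\in A$, $v(a)\neq\mathbf{u}$ implies $f(v_2)(a)=v(a)$ for all $v_2\in[v]_2$, and $v(a)=\mathbf{u}$ implies $f(v_2')(a)=\mathbf{t}$ and $f(v_2'')(a)=\mathbf{f}$ for some $v_2',v_2''\in[v]_2$. - $f$ is a mod-characterization of $V$ iff $V\subseteq\mathcal{V}_2$ and for each $v\in\mathcal{V}_2$, $v\in V$ iff $f(v)=v$. *)

theory Defs
  imports Main
begin

(* The fixed finite set A of statements is the finite type 'a (A = UNIV). *)

datatype tv = TT | FF | UU

type_synonym 'a interp = "'a \<Rightarrow> tv"

definition info_le_tv :: "tv \<Rightarrow> tv \<Rightarrow> bool" where
  "info_le_tv x y \<longleftrightarrow> x = UU \<or> x = y"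

definition info_le :: "'a interp \<Rightarrow> 'a interp \<Rightarrow> bool" where
  "info_le v w \<longleftrightarrow> (\<forall>a. info_le_tv (v a) (w a))"

definition two_valued :: "'a interp set" where
  "two_valued = {v. \<forall>a. v a \<noteq> UU}"

definition completions :: "'a interp \<Rightarrow> 'a interp set" where
  "completions v = {w \<in> two_valued. info_le v w}"

datatype 'a formula = Atom 'a | Top | Bot | Neg "'a formula"
  | Conj "'a formula" "'a formula" | Disj "'a formula" "'a formula"
  | Impl "'a formula" "'a formula"

fun atoms :: "'a formula \<Rightarrow> 'a set" where
  "atoms (Atom a) = {a}"
| "atoms Top = {}"
| "atoms Bot = {}"
| "atoms (Neg p) = atoms p"
| "atoms (Conj p q) = atoms p \<union> atoms q"
| "atoms (Disj p q) = atoms p \<union> atoms q"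
| "atoms (Impl p q) = atoms p \<union> atoms q"

(* w(phi) for a two-valued interpretation w *)
fun eval :: "'a interp \<Rightarrow> 'a formula \<Rightarrow> tv" where
  "eval w (Atom a) = w a"
| "eval w Top = TT"
| "eval w Bot = FF"
| "eval w (Neg p) = (if eval w p = TT then FF else TT)"
| "eval w (Conj p q) = (if eval w p = TT \<and> eval w q = TT then TT else FF)"
| "eval w (Disj p q) = (if eval w p = TT \<or> eval w q = TT then TT else FF)"
| "eval w (Impl p q) = (if eval w p = TT \<longrightarrow> eval w q = TT then TT else FF)"

(* ADF D = (A, L, C): statements A = UNIV :: 'a set, links L, acceptance formulas *)
record 'a adf =
  links :: "('a \<times> 'a) set"
  acc :: "'a \<Rightarrow> 'a formula"

definition parents :: "'a adf \<Rightarrow> 'a \<Rightarrow> 'a set" where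
  "parents D a = {b. (b, a) \<in> links D}"

definition wf_adf :: "'a adf \<Rightarrow> bool" where
  "wf_adf D \<longleftrightarrow> (\<forall>a. atoms (acc D a) \<subseteq> parents D a)"

(* greatest lower bound w.r.t. <=_i (consensus) *)
definition consensus :: "tv set \<Rightarrow> tv" where
  "consensus S = (if (\<forall>x\<in>S. x = TT) then TT else if (\<forall>x\<in>S. x = FF) then FF else UU)"

definition Gamma :: "'a adf \<Rightarrow> 'a interp \<Rightarrow> 'a interp" where
  "Gamma D v = (\<lambda>a. consensus {eval w (acc D a) | w. w \<in> completions v})"

definition adm :: "'a adf \<Rightarrow> 'a interp set" where
  "adm D = {v. info_le v (Gamma D v)}"

definition com :: "'a adf \<Rightarrow> 'a interp set" where
  "com D = {v. Gamma D v = v}"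

definition mdl :: "'a adf \<Rightarrow> 'a interp set" where
  "mdl D = {v \<in> two_valued. Gamma D v = v}"

datatype sem = Adm | Com | Mod

fun sem_of :: "sem \<Rightarrow> 'a adf \<Rightarrow> 'a interp set" where
  "sem_of Adm D = adm D"
| "sem_of Com D = com D"
| "sem_of Mod D = mdl D"

(* f : V_2 \<rightarrow> V_2 (values outside V_2 are irrelevant) *)
definition maps_V2 :: "('a interp \<Rightarrow> 'a interp) \<Rightarrow> bool" where
  "maps_V2 f \<longleftrightarrow> (\<forall>w\<in>two_valued. f w \<in> two_valued)"

definition adm_char :: "('a interp \<Rightarrow> 'a interp) \<Rightarrow> 'a interp set \<Rightarrow> bool" where
  "adm_char f V \<longleftrightarrow> maps_V2 f \<and> (\<forall>v. v \<in> V \<longleftrightarrow>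
     (\<forall>a. v a \<noteq> UU \<longrightarrow> (\<forall>v2\<in>completions v. f v2 a = v a)))"

definition com_char :: "('a interp \<Rightarrow> 'a interp) \<Rightarrow> 'a interp set \<Rightarrow> bool" where
  "com_char f V \<longleftrightarrow> maps_V2 f \<and> (\<forall>v. v \<in> V \<longleftrightarrow>
     (\<forall>a. (v a \<noteq> UU \<longrightarrow> (\<forall>v2\<in>completions v. f v2 a = v a)) \<and>
          (v a = UU \<longrightarrow> (\<exists>v2'\<in>completions v. f v2' a = TT) \<and>
                          (\<exists>v2''\<in>completions v. f v2'' a = FF))))"

definition mod_char :: "('a interp \<Rightarrow> 'a interp) \<Rightarrow> 'a interp set \<Rightarrow> bool" where
  "mod_char f V \<longleftrightarrow> maps_V2 f \<and> V \<subseteq> two_valued \<and>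
     (\<forall>v\<in>two_valued. v \<in> V \<longleftrightarrow> f v = v)"

fun sem_char :: "sem \<Rightarrow> ('a interp \<Rightarrow> 'a interp) \<Rightarrow> 'a interp set \<Rightarrow> bool" where
  "sem_char Adm f V = adm_char f V"
| "sem_char Com f V = com_char f V"
| "sem_char Mod f V = mod_char f V"

end

theory Submission
  imports Defs
begin

text \<open>All three semantics of an ADF \<open>D\<close> depend on \<open>D\<close> only through the map
  \<open>w \<mapsto> (a \<mapsto> w(\<phi>\<^sub>a))\<close> on two-valued interpretations: on two-valued arguments this map
  is \<open>\<Gamma>\<^sub>D\<close> itself, and in general \<open>\<Gamma>\<^sub>D(v)(a)\<close> is the consensus of its values over
  \<open>[v]\<^sub>2\<close>. Unfolding admissibility, completeness and models in these terms gives exactly the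
  conditions of the respective characterizations. Conversely, every map \<open>f : V\<^sub>2 \<rightarrow> V\<^sub>2\<close>
  arises from some ADF: take as \<open>\<phi>\<^sub>a\<close> the disjunction of the minterms of all two-valued
  \<open>w\<close> with \<open>f(w)(a) = t\<close>.\<close>

instance tv :: finite
proof
  have "(UNIV :: tv set) = {TT, FF, UU}" by (auto intro: tv.exhaust)
  then show "finite (UNIV :: tv set)" by (metis finite.emptyI finite_insert)
qed

fun char_sem :: "sem \<Rightarrow> ('a interp \<Rightarrow> 'a interp) \<Rightarrow> 'a interp set" where
  "char_sem Adm f = {v. \<forall>a. v a \<noteq> UU \<longrightarrow> (\<forall>w\<in>completions v. f w a = v a)}"
| "char_sem Com f = {v. \<forall>a. (v a \<noteq> UU \<longrightarrow> (\<forall>w\<in>completions v. f w a = v a)) \<and>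
      (v a = UU \<longrightarrow> (\<exists>w\<in>completions v. f w a = TT) \<and> (\<exists>w\<in>completions v. f w a = FF))}"
| "char_sem Mod f = {v \<in> two_valued. f v = v}"

lemma sem_char_iff: "sem_char \<sigma> f V \<longleftrightarrow> maps_V2 f \<and> V = char_sem \<sigma> f"
  by (cases \<sigma>) (auto simp: adm_char_def com_char_def mod_char_def)

definition realizes :: "'a adf \<Rightarrow> ('a interp \<Rightarrow> 'a interp) \<Rightarrow> bool" where
  "realizes D f \<longleftrightarrow> (\<forall>w\<in>two_valued. \<forall>a. eval w (acc D a) = f w a)"

lemma eval_two_valued: "w \<in> two_valued \<Longrightarrow> eval w \<phi> \<noteq> UU"
  by (induction \<phi>) (auto simp: two_valued_def)

lemma realizes_eval: "realizes D (\<lambda>w a. eval w (acc D a))"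
  by (simp add: realizes_def)

lemma realizes_maps_V2:
  assumes "realizes D f"
  shows "maps_V2 f"
  unfolding maps_V2_def
proof
  fix w :: "'a interp" assume "w \<in> two_valued"
  then have "f w a \<noteq> UU" for a
    using assms eval_two_valued by (metis realizes_def)
  then show "f w \<in> two_valued" by (simp add: two_valued_def)
qed

lemma completions_nonempty: "completions v \<noteq> {}"
proof -
  have "(\<lambda>a. if v a = UU then TT else v a) \<in> completions v"
    by (auto simp: completions_def two_valued_def info_le_def info_le_tv_def)
  then show ?thesis by blast
qed

lemma completions_two_valued: "v \<in> two_valued \<Longrightarrow> completions v = {v}"
  by (auto simp: completions_def two_valued_def info_le_def info_le_tv_def fun_eq_iff)

lemma completions_subset_two_valued: "completions v \<subseteq> two_valued"
  by (simp add: completions_def)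

lemma two_valued_cases: "x \<noteq> UU \<Longrightarrow> x = TT \<or> x = FF"
  by (cases x) auto

lemma Gamma_realizes:
  assumes "realizes D f"
  shows "Gamma D v a = consensus ((\<lambda>w. f w a) ` completions v)"
proof -
  have "eval w (acc D a) = f w a" if "w \<in> completions v" for w
    using assms that completions_subset_two_valued by (auto simp: realizes_def)
  then show ?thesis
    by (simp add: Gamma_def Setcompr_eq_image cong: image_cong)
qed

lemma Gamma_eq_two_valued_iff:
  assumes "realizes D f" and "x \<noteq> UU"
  shows "Gamma D v a = x \<longleftrightarrow> (\<forall>w\<in>completions v. f w a = x)"
  using two_valued_cases[OF \<open>x \<noteq> UU\<close>] completions_nonempty[of v]
  by (auto simp: Gamma_realizes[OF assms(1)] consensus_def)

lemma Gamma_eq_UU_iff: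
  assumes "realizes D f"
  shows "Gamma D v a = UU \<longleftrightarrow> (\<exists>w\<in>completions v. f w a = TT) \<and> (\<exists>w\<in>completions v. f w a = FF)"
proof -
  have "f w a \<noteq> UU" if "w \<in> completions v" for w
    using realizes_maps_V2[OF assms] completions_subset_two_valued that
    by (auto simp: maps_V2_def two_valued_def)
  then have "f w a = TT \<or> f w a = FF" if "w \<in> completions v" for w
    using two_valued_cases that by blast
  then show ?thesis
    by (auto simp: Gamma_realizes[OF assms] consensus_def)
qed

lemma Gamma_two_valued:
  assumes "realizes D f" and "v \<in> two_valued"
  shows "Gamma D v = f v"
proof
  fix a
  have "f v a \<noteq> UU"
    using realizes_maps_V2[OF assms(1)] assms(2) by (auto simp: maps_V2_def two_valued_def)
  then show "Gamma D v a = f v a"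
    using Gamma_eq_two_valued_iff[OF assms(1)] completions_two_valued[OF assms(2)] by simp
qed

lemma sem_of_realizes:
  assumes "realizes D f"
  shows "sem_of \<sigma> D = char_sem \<sigma> f"
proof (cases \<sigma>)
  case Adm
  have "v a = UU \<or> v a = Gamma D v a \<longleftrightarrow> (v a \<noteq> UU \<longrightarrow> (\<forall>w\<in>completions v. f w a = v a))" for v a
    using Gamma_eq_two_valued_iff[OF assms, of "v a" v a] by metis
  then show ?thesis
    using Adm by (simp add: adm_def info_le_def info_le_tv_def)
next
  case Com
  have "Gamma D v a = v a \<longleftrightarrow> (v a \<noteq> UU \<longrightarrow> (\<forall>w\<in>completions v. f w a = v a)) \<and>
      (v a = UU \<longrightarrow> (\<exists>w\<in>completions v. f w a = TT) \<and> (\<exists>w\<in>completions v. f w a = FF))" for v a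
    using Gamma_eq_two_valued_iff[OF assms] Gamma_eq_UU_iff[OF assms] by (cases "v a = UU") auto
  then show ?thesis
    using Com by (auto simp: com_def fun_eq_iff)
next
  case Mod
  then show ?thesis
    using Gamma_two_valued[OF assms] by (auto simp: mdl_def)
qed

definition univ_list :: "'b::finite list" where
  "univ_list = (SOME xs. set xs = UNIV)"

lemma set_univ_list: "set (univ_list :: 'b::finite list) = UNIV"
  unfolding univ_list_def by (rule someI_ex) (rule finite_list, simp)

definition lit :: "'a interp \<Rightarrow> 'a \<Rightarrow> 'a formula" where
  "lit w b = (if w b = TT then Atom b else Neg (Atom b))"

definition minterm :: "'a::finite interp \<Rightarrow> 'a formula" where
  "minterm w = foldr (\<lambda>b \<phi>. Conj (lit w b) \<phi>) univ_list Top"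

definition disj_list :: "'a formula list \<Rightarrow> 'a formula" where
  "disj_list \<phi>s = foldr Disj \<phi>s Bot"

lemma eval_disj_list: "eval u (disj_list \<phi>s) = TT \<longleftrightarrow> (\<exists>\<phi>\<in>set \<phi>s. eval u \<phi> = TT)"
  unfolding disj_list_def by (induction \<phi>s) auto

lemma eval_lit:
  "u \<in> two_valued \<Longrightarrow> w \<in> two_valued \<Longrightarrow> eval u (lit w b) = TT \<longleftrightarrow> u b = w b"
  unfolding lit_def two_valued_def by (cases "u b"; cases "w b") auto

lemma eval_minterm:
  assumes "u \<in> two_valued" and "w \<in> two_valued"
  shows "eval u (minterm w) = TT \<longleftrightarrow> u = w"
proof -
  have "eval u (foldr (\<lambda>b \<phi>. Conj (lit w b) \<phi>) bs Top) = TT \<longleftrightarrow> (\<forall>b\<in>set bs. u b = w b)" for bs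
    using eval_lit[OF assms] by (induction bs) auto
  then show ?thesis by (simp add: minterm_def set_univ_list fun_eq_iff)
qed

definition adf_of :: "('a::finite interp \<Rightarrow> 'a interp) \<Rightarrow> 'a adf" where
  "adf_of f = \<lparr>links = UNIV,
     acc = (\<lambda>a. disj_list (map minterm [w \<leftarrow> univ_list. w \<in> two_valued \<and> f w a = TT]))\<rparr>"

lemma wf_adf_of: "wf_adf (adf_of f)"
  by (simp add: wf_adf_def adf_of_def parents_def)

lemma realizes_adf_of:
  assumes "maps_V2 f"
  shows "realizes (adf_of f) f"
  unfolding realizes_def
proof (intro ballI allI)
  fix w :: "'a interp" and a :: 'a
  assume w: "w \<in> two_valued"
  have "eval w (acc (adf_of f) a) = TT \<longleftrightarrow> f w a = TT"
    using eval_minterm[OF w] w by (auto simp: adf_of_def eval_disj_list set_univ_list)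
  moreover have "eval w (acc (adf_of f) a) \<noteq> UU" and "f w a \<noteq> UU"
    using eval_two_valued[OF w] assms w by (auto simp: maps_V2_def two_valued_def)
  ultimately show "eval w (acc (adf_of f) a) = f w a"
    by (cases "eval w (acc (adf_of f) a)"; cases "f w a") simp_all
qed

theorem theorem1:
  fixes V :: "('a::finite) interp set" and \<sigma> :: sem
  shows "(\<exists>D :: 'a adf. wf_adf D \<and> sem_of \<sigma> D = V) \<longleftrightarrow> (\<exists>f. sem_char \<sigma> f V)"
  unfolding sem_char_iff
proof
  assume "\<exists>D :: 'a adf. wf_adf D \<and> sem_of \<sigma> D = V"
  then obtain D :: "'a adf" where D: "sem_of \<sigma> D = V" by blast
  let ?f = "\<lambda>w a. eval w (acc D a)"
  have "maps_V2 ?f" and "V = char_sem \<sigma> ?f"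
    using realizes_maps_V2 sem_of_realizes D realizes_eval by blast+
  then show "\<exists>f. maps_V2 f \<and> V = char_sem \<sigma> f" by blast
next
  assume "\<exists>f. maps_V2 f \<and> V = char_sem \<sigma> f"
  then obtain f where f: "maps_V2 f" "V = char_sem \<sigma> f" by blast
  have "sem_of \<sigma> (adf_of f) = V"
    using sem_of_realizes[OF realizes_adf_of[OF f(1)]] f(2) by simp
  then show "\<exists>D :: 'a adf. wf_adf D \<and> sem_of \<sigma> D = V"
    using wf_adf_of by blast
qed

end
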